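(* Let $\mu>0$, $1\le p<+\infty$ and $f\in L^p_\mu([0,1])$. Then for every $n\in\mathbb{N}$, $\|\mathscr{L}_n^K f\|_{p,\mu}^p\le K_\mu\,\|f\|_{p,\mu}^p$ with $K_\mu:=1+\frac{1}{1+\mu}$, and $\|\mathscr{L}_n^K f-f\|_{p,\mu}\to 0$ as $n\to+\infty$.
   Context: Fix $\mu>0$. Let $\ln_\mu(x):=\ln(1+\mu+x)$ for $x\in[0,1]$, and for $f:[0,1]\to\mathbb{R}$ let $f_\mu(x):=f(x)/\ln_\mu(x)$. Let $p_{n,k}(y):=\binom{n}{k}y^k(1-y)^{n-k}$ and $a_{n+1}(x):=\dfrac{\ln\left(1+\frac{x}{(n+1)(1+\mu)}\right)}{\ln\left(1+\frac{1}{(n+1)(1+\mu)}\right)}$, $x\in[0,1]$. For $n\in\mathbb{N}$ define $\mathscr{L}_n^K f(x):=\ln_\mu(x)\sum_{k=0}^n p_{n,k}(a_{n+1}(x))\,(n+1)\int_{k/(n+1)}^{(k+1)/(n+1)} f_\mu(t)\,dt$, $x\in[0,1]$. The weighted space $L^p_\mu([0,1])$ is the space of measurable $f:[0,1]\to\mathbb{R}$ with $\|f\|_{p,\mu}:=\left(\int_0^1|f_\mu(x)|^p\,dx\right)^{1/p}<+\infty$. *)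

theory Defs
  imports "HOL-Analysis.Analysis"
begin

definition ln_mu :: "real \<Rightarrow> real \<Rightarrow> real" where
  "ln_mu \<mu> x = ln (1 + \<mu> + x)"

definition f_mu :: "real \<Rightarrow> (real \<Rightarrow> real) \<Rightarrow> real \<Rightarrow> real" where
  "f_mu \<mu> f x = f x / ln_mu \<mu> x"

definition bern_basis :: "nat \<Rightarrow> nat \<Rightarrow> real \<Rightarrow> real" where
  "bern_basis n k y = real (n choose k) * y ^ k * (1 - y) ^ (n - k)"

definition a_seq :: "real \<Rightarrow> nat \<Rightarrow> real \<Rightarrow> real" where
  "a_seq \<mu> m x = ln (1 + x / (real m * (1 + \<mu>))) / ln (1 + 1 / (real m * (1 + \<mu>)))"

definition kant_op :: "real \<Rightarrow> nat \<Rightarrow> (real \<Rightarrow> real) \<Rightarrow> real \<Rightarrow> real" where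
  "kant_op \<mu> n f x = ln_mu \<mu> x *
     (\<Sum>k=0..n. bern_basis n k (a_seq \<mu> (n+1) x) *
        (real (n+1) * (LINT t:{real k / real (n+1) .. real (k+1) / real (n+1)}|lebesgue. f_mu \<mu> f t)))"

definition wnorm_pow :: "real \<Rightarrow> real \<Rightarrow> (real \<Rightarrow> real) \<Rightarrow> real" where
  "wnorm_pow \<mu> p f = (LINT x:{0..1}|lebesgue. \<bar>f_mu \<mu> f x\<bar> powr p)"

definition wnorm :: "real \<Rightarrow> real \<Rightarrow> (real \<Rightarrow> real) \<Rightarrow> real" where
  "wnorm \<mu> p f = wnorm_pow \<mu> p f powr (1 / p)"

definition in_Lp_mu :: "real \<Rightarrow> real \<Rightarrow> (real \<Rightarrow> real) \<Rightarrow> bool" where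
  "in_Lp_mu \<mu> p f \<longleftrightarrow> f \<in> borel_measurable (restrict_space lebesgue {0..1}) \<and>
     set_integrable lebesgue {0..1} (\<lambda>x. \<bar>f_mu \<mu> f x\<bar> powr p)"

end

theory Submission
  imports Defs
begin

(* Dividing by ln_mu turns kant_op into a Kantorovich operator acting on g = f_mu f, in which the
   Bernstein basis is evaluated at the warped point ln (1 + c x) / ln (1 + c), c = 1 / ((n+1)(1+mu)).
   Jensen's inequality, applied to the Bernstein weights and to the cell averages, bounds the p-th power
   of the operator pointwise by the Bernstein combination of the cell averages of |g|^p.  Substituting
   the warped point, whose derivative is at least 1 / (1 + c), shows that each warped Bernstein
   polynomial has integral at most (1 + c) / (n + 1); summing over the cells gives the factor
   1 + c <= 1 + 1 / (1 + mu).
   For convergence: on continuous functions the operator converges uniformly, since the warp moves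
   points by at most c <= 1/n and the Bernstein weights have variance y (1 - y) / n; continuous
   functions are dense in L^p, and the uniform bound controls the operator on the remainder. *)

section \<open>Convexity of the \<open>p\<close>-th power\<close>

lemma abs_powr_supporting_line:
  fixes p c :: real
  assumes p: "p \<ge> 1"
  obtains m where "\<And>t. \<bar>c\<bar> powr p + m * (t - c) \<le> \<bar>t\<bar> powr p"
proof -
  have pos: "b powr p + p * b powr (p - 1) * (t - b) \<le> \<bar>t\<bar> powr p" if b: "b > 0" for b t :: real
  proof (cases "t > 0")
    case True
    have "p * b powr (p - 1) * (t - b) \<le> t powr p - b powr p"
    proof (rule convex_on_imp_above_tangent[where A="{0<..}" and f="\<lambda>x. x powr p"])
      show "((\<lambda>x. x powr p) has_field_derivative p * b powr (p - 1)) (at b within {0<..})"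
        using b by (auto intro!: derivative_eq_intros)
    qed (use powr_convex[OF p] b True in \<open>auto simp: interior_open\<close>)
    with True show ?thesis by simp
  next
    case False
    \<comment> \<open>the tangent at \<open>b\<close> is already negative at \<open>t \<le> 0\<close>\<close>
    have "b powr p = b powr (p - 1) * b"
      using b powr_add[of b "p - 1" 1] by simp
    then have "b powr p + p * b powr (p - 1) * (t - b) = b powr (p - 1) * (b * (1 - p) + p * t)"
      by (simp add: algebra_simps)
    also have "\<dots> \<le> 0"
      using b p False by (intro mult_nonneg_nonpos add_nonpos_nonpos mult_nonneg_nonpos2) auto
    finally show ?thesis using powr_ge_zero[of "\<bar>t\<bar>" p] by linarith
  qed
  consider "c = 0" | "c > 0" | "c < 0" by linarith
  then show ?thesis
  proof cases
    case 1
    then show ?thesis by (intro that[of 0]) simp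
  next
    case 2
    then show ?thesis using pos[of c] by (intro that[of "p * c powr (p - 1)"]) simp
  next
    case 3
    show ?thesis
    proof (rule that[of "- p * (- c) powr (p - 1)"])
      fix t
      show "\<bar>c\<bar> powr p + - p * (- c) powr (p - 1) * (t - c) \<le> \<bar>t\<bar> powr p"
        using pos[of "- c" "- t"] 3 by (simp add: algebra_simps)
    qed
  qed
qed

lemma jensen_abs_powr_sum:
  fixes w x :: "'a \<Rightarrow> real"
  assumes p: "p \<ge> 1" and w: "\<And>i. i \<in> S \<Longrightarrow> w i \<ge> 0" and sum_w: "(\<Sum>i\<in>S. w i) = 1"
  shows "\<bar>\<Sum>i\<in>S. w i * x i\<bar> powr p \<le> (\<Sum>i\<in>S. w i * \<bar>x i\<bar> powr p)"
proof -
  define c where "c = (\<Sum>i\<in>S. w i * x i)"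
  obtain m where m: "\<And>t. \<bar>c\<bar> powr p + m * (t - c) \<le> \<bar>t\<bar> powr p"
    using abs_powr_supporting_line[OF p] by blast
  have "(\<Sum>i\<in>S. w i * (\<bar>c\<bar> powr p + m * (x i - c))) \<le> (\<Sum>i\<in>S. w i * \<bar>x i\<bar> powr p)"
    by (intro sum_mono mult_left_mono m w)
  moreover have "(\<Sum>i\<in>S. w i * (\<bar>c\<bar> powr p + m * (x i - c))) = \<bar>c\<bar> powr p"
    using sum_w by (simp add: algebra_simps sum.distrib sum_subtractf
        flip: sum_distrib_left sum_distrib_right c_def)
  ultimately show ?thesis by (simp add: c_def)
qed

lemma jensen_abs_powr_integral:
  fixes g :: "real \<Rightarrow> real"
  assumes p: "p \<ge> 1" and ab: "a < b"
    and g: "g integrable_on {a..b}" and gp: "(\<lambda>x. \<bar>g x\<bar> powr p) integrable_on {a..b}"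
  shows "\<bar>integral {a..b} g / (b - a)\<bar> powr p \<le> integral {a..b} (\<lambda>x. \<bar>g x\<bar> powr p) / (b - a)"
proof -
  define c where "c = integral {a..b} g / (b - a)"
  obtain m where m: "\<And>t. \<bar>c\<bar> powr p + m * (t - c) \<le> \<bar>t\<bar> powr p"
    using abs_powr_supporting_line[OF p] by blast
  have "((\<lambda>x. \<bar>c\<bar> powr p + m * (g x - c)) has_integral
          (b - a) * \<bar>c\<bar> powr p + m * (integral {a..b} g - (b - a) * c)) {a..b}"
    using ab by (intro has_integral_add has_integral_mult_right has_integral_diff
        integrable_integral g) (auto intro: has_integral_const_real[THEN has_integral_eq_rhs])
  also have "(b - a) * \<bar>c\<bar> powr p + m * (integral {a..b} g - (b - a) * c) = (b - a) * \<bar>c\<bar> powr p"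
    using ab by (simp add: c_def)
  finally have "(b - a) * \<bar>c\<bar> powr p \<le> integral {a..b} (\<lambda>x. \<bar>g x\<bar> powr p)"
    using gp m by (intro has_integral_le[OF _ integrable_integral]) auto
  with ab show ?thesis by (simp add: c_def[symmetric] pos_le_divide_eq mult.commute)
qed

lemma abs_powr_add_le:
  fixes u v p :: real
  assumes p: "p \<ge> 1"
  shows "\<bar>u + v\<bar> powr p \<le> 2 powr p * (\<bar>u\<bar> powr p + \<bar>v\<bar> powr p)"
proof -
  have "\<bar>(1/2) * u + (1/2) * v\<bar> powr p \<le> (1/2) * \<bar>u\<bar> powr p + (1/2) * \<bar>v\<bar> powr p"
    using jensen_abs_powr_sum[OF p, of "{True, False}" "\<lambda>_. 1/2" "\<lambda>b. if b then u else v"] by simp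
  also have "\<bar>(1/2) * u + (1/2) * v\<bar> powr p = \<bar>u + v\<bar> powr p / 2 powr p"
    by (simp add: powr_divide flip: add_divide_distrib)
  finally have "\<bar>u + v\<bar> powr p \<le> 2 powr p * (\<bar>u\<bar> powr p + \<bar>v\<bar> powr p) / 2"
    by (simp add: field_simps)
  also have "\<dots> \<le> 2 powr p * (\<bar>u\<bar> powr p + \<bar>v\<bar> powr p)" by simp
  finally show ?thesis .
qed

lemma abs_powr_add3_le:
  fixes a b d p :: real
  assumes p: "p \<ge> 1"
  shows "\<bar>a + b + d\<bar> powr p \<le> 4 powr p * (\<bar>a\<bar> powr p + \<bar>b\<bar> powr p + \<bar>d\<bar> powr p)"
proof -
  have "\<bar>a + (b + d)\<bar> powr p \<le> 2 powr p * (\<bar>a\<bar> powr p + 2 powr p * (\<bar>b\<bar> powr p + \<bar>d\<bar> powr p))"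
    using abs_powr_add_le[OF p, of a "b + d"] abs_powr_add_le[OF p, of b d]
    by (smt (verit) mult_left_mono powr_ge_zero)
  also have "\<dots> \<le> 2 powr p * (2 powr p * \<bar>a\<bar> powr p + 2 powr p * (\<bar>b\<bar> powr p + \<bar>d\<bar> powr p))"
    using p by (intro mult_left_mono add_right_mono) (auto simp: mult_le_cancel_right1 ge_one_powr_ge_zero)
  also have "\<dots> = 2 powr p * 2 powr p * (\<bar>a\<bar> powr p + \<bar>b\<bar> powr p + \<bar>d\<bar> powr p)"
    by (simp add: algebra_simps)
  also have "2 powr p * 2 powr p = (4::real) powr p"
    by (simp flip: powr_mult)
  finally show ?thesis by (simp add: add.assoc)
qed

lemma abs_le_one_plus_abs_powr:
  fixes y p :: real
  assumes "p \<ge> 1"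
  shows "\<bar>y\<bar> \<le> 1 + \<bar>y\<bar> powr p"
proof (cases "\<bar>y\<bar> \<le> 1")
  case False
  then have "\<bar>y\<bar> powr 1 \<le> \<bar>y\<bar> powr p" using assms by (intro powr_mono) auto
  with False show ?thesis by simp
qed (simp add: add_increasing2)

lemma bern_basis_eq_Bernstein: "bern_basis = Bernstein"
  by (simp add: fun_eq_iff bern_basis_def Bernstein_def)

lemma continuous_on_Bernstein [continuous_intros]:
  "continuous_on S g \<Longrightarrow> continuous_on S (\<lambda>x. Bernstein n k (g x))"
  unfolding Bernstein_def by (intro continuous_intros)

lemma Bernstein_has_integral:
  assumes "k \<le> n"
  shows "(Bernstein n k has_integral 1 / (real n + 1)) {0..1}"
proof -
  have Gamma_Suc: "Gamma (real m + 1) = fact m" for m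
    using Gamma_fact[of m] by (simp add: add.commute)
  have "real k + 1 + (real (n - k) + 1) = real (Suc n) + 1"
    using assms by (simp add: of_nat_diff)
  then have "Beta (real k + 1) (real (n - k) + 1) = fact k * fact (n - k) / fact (Suc n)"
    by (simp only: Beta_def Gamma_Suc)
  also have "real (n choose k) * \<dots> = 1 / (real n + 1)"
    using assms by (simp add: binomial_fact field_simps add_nonneg_eq_0_iff)
  finally have Beta_eq: "real (n choose k) * Beta (real k + 1) (real (n - k) + 1) = 1 / (real n + 1)" .
  have "((\<lambda>t. real (n choose k) * (t powr (real k + 1 - 1) * (1 - t) powr (real (n - k) + 1 - 1)))
          has_integral 1 / (real n + 1)) {0<..<1}"
    unfolding Beta_eq[symmetric] has_integral_Icc_iff_Ioo[symmetric]
    by (intro has_integral_mult_right has_integral_Beta_real) auto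
  then have "(Bernstein n k has_integral 1 / (real n + 1)) {0<..<1}"
    by (rule has_integral_eq[rotated]) (auto simp: Bernstein_def powr_realpow)
  then show ?thesis by (simp add: has_integral_Icc_iff_Ioo)
qed

lemma sum_Bernstein_sq_dev:
  assumes "n > 0"
  shows "(\<Sum>k\<le>n. Bernstein n k y * (real k / real n - y)\<^sup>2) = y * (1 - y) / real n"
proof -
  have "(\<Sum>k\<le>n. Bernstein n k y * (real k - real n * y)\<^sup>2)
      = (\<Sum>k\<le>n. real k * (real k - 1) * Bernstein n k y)
        + (1 - 2 * real n * y) * (\<Sum>k\<le>n. real k * Bernstein n k y)
        + (real n * y)\<^sup>2 * (\<Sum>k\<le>n. Bernstein n k y)"
    unfolding sum_distrib_left sum.distrib[symmetric]
    by (intro sum.cong refl) (simp add: algebra_simps power2_eq_square)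
  also have "\<dots> = real n * y * (1 - y)"
    unfolding sum_kk_Bernstein sum_k_Bernstein sum_Bernstein by (simp add: algebra_simps power2_eq_square)
  finally have "(\<Sum>k\<le>n. Bernstein n k y * (real k - real n * y)\<^sup>2) = real n * y * (1 - y)" .
  moreover have "(\<Sum>k\<le>n. Bernstein n k y * (real k / real n - y)\<^sup>2)
      = (\<Sum>k\<le>n. Bernstein n k y * (real k - real n * y)\<^sup>2) / (real n)\<^sup>2"
    unfolding sum_divide_distrib using assms by (intro sum.cong refl) (simp add: field_simps)
  ultimately show ?thesis
    using assms by (simp add: power2_eq_square)
qed

section \<open>The logarithmic warp\<close>

lemma ln_one_plus_ge:
  fixes t :: real
  assumes "0 \<le> t"
  shows "t / (1 + t) \<le> ln (1 + t)"
proof -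
  have "ln (1 / (1 + t)) \<le> 1 / (1 + t) - 1"
    using assms by (intro ln_le_minus_one) auto
  with assms show ?thesis by (simp add: ln_div field_simps)
qed

definition log_warp :: "real \<Rightarrow> real \<Rightarrow> real" where
  "log_warp c x = ln (1 + c * x) / ln (1 + c)"

lemma log_warp_0 [simp]: "log_warp c 0 = 0"
  by (simp add: log_warp_def)

lemma log_warp_1 [simp]: "c > 0 \<Longrightarrow> log_warp c 1 = 1"
  by (simp add: log_warp_def)

lemma log_warp_ge:
  assumes c: "c > 0" and x: "0 \<le> x" "x \<le> 1"
  shows "x \<le> log_warp c x"
proof -
  have "(1 - x) * ln 1 + x * ln (1 + c) \<le> ln ((1 - x) *\<^sub>R 1 + x *\<^sub>R (1 + c))"
    using c x by (intro concave_onD[OF ln_concave]) auto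
  then have "x * ln (1 + c) \<le> ln (1 + c * x)"
    by (simp add: algebra_simps)
  with c show ?thesis by (simp add: log_warp_def le_divide_eq)
qed

lemma log_warp_le:
  assumes c: "c > 0" and x: "0 \<le> x"
  shows "log_warp c x \<le> (1 + c) * x"
proof -
  have "ln (1 + c * x) \<le> (1 + c) * x * (c / (1 + c))"
    using c x ln_add_one_self_le_self[of "c * x"] by (simp add: mult.commute)
  also have "\<dots> \<le> (1 + c) * x * ln (1 + c)"
    using c x ln_one_plus_ge[of c] by (intro mult_left_mono) auto
  finally show ?thesis
    using c by (simp add: log_warp_def divide_le_eq)
qed

lemma log_warp_bounds:
  assumes "c > 0" and "0 \<le> x" "x \<le> 1"
  shows "0 \<le> log_warp c x" "log_warp c x \<le> 1"
proof -
  show "0 \<le> log_warp c x" using assms log_warp_ge by fastforce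
  have "ln (1 + c * x) \<le> ln (1 + c)"
    using assms by (simp add: mult_left_le add_pos_nonneg)
  with assms show "log_warp c x \<le> 1" by (simp add: log_warp_def)
qed

lemma log_warp_dist:
  assumes "c > 0" and "0 \<le> x" "x \<le> 1"
  shows "\<bar>log_warp c x - x\<bar> \<le> c"
proof -
  have "c * x \<le> c" using assms by (simp add: mult_left_le)
  moreover have "(1 + c) * x = x + c * x" by (simp add: algebra_simps)
  ultimately show ?thesis
    using log_warp_ge[OF assms] log_warp_le[of c x] assms by linarith
qed

lemma log_warp_has_derivative:
  assumes "c > 0" and "0 \<le> x"
  shows "(log_warp c has_real_derivative c / ((1 + c * x) * ln (1 + c))) (at x within S)"
  unfolding log_warp_def using assms
  by (auto intro!: derivative_eq_intros simp: add_pos_nonneg)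

lemma log_warp_derivative_ge:
  fixes c x :: real
  assumes c: "c > 0" and x: "0 \<le> x" "x \<le> 1"
  shows "1 / (1 + c) \<le> c / ((1 + c * x) * ln (1 + c))"
proof -
  have "(1 + c * x) * ln (1 + c) \<le> (1 + c) * c"
    using c x ln_add_one_self_le_self[of c] by (intro mult_mono) (auto simp: mult_left_le)
  moreover have "0 < (1 + c * x) * ln (1 + c)"
    using c x by (simp add: add_pos_nonneg)
  ultimately show ?thesis
    using c by (simp add: field_simps)
qed

lemma continuous_on_log_warp: "c > 0 \<Longrightarrow> continuous_on {0..1} (log_warp c)"
  by (rule DERIV_continuous_on[OF log_warp_has_derivative]) auto

lemma integral_Bernstein_log_warp_le:
  assumes c: "c > 0" and "k \<le> n"
  shows "integral {0..1} (\<lambda>x. Bernstein n k (log_warp c x)) \<le> (1 + c) / (real n + 1)"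
proof -
  define w where "w x = c / ((1 + c * x) * ln (1 + c))" for x
  have "((\<lambda>x. w x *\<^sub>R Bernstein n k (log_warp c x)) has_integral
      integral {log_warp c 0..log_warp c 1} (Bernstein n k)) {0..1}"
  proof (rule has_integral_substitution)
    show "log_warp c ` {0..1} \<subseteq> {0..1}"
      using log_warp_bounds[OF c] by auto
    show "continuous_on {0..1} (Bernstein n k)"
      unfolding Bernstein_def by (intro continuous_intros)
    show "(log_warp c has_real_derivative w x) (at x within {0..1})" if "x \<in> {0..1}" for x
      unfolding w_def using c that by (intro log_warp_has_derivative) auto
  qed (use c in auto)
  then have "((\<lambda>x. w x * Bernstein n k (log_warp c x)) has_integral 1 / (real n + 1)) {0..1}"
    using c integral_unique[OF Bernstein_has_integral[OF \<open>k \<le> n\<close>]] by simp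
  then have subst: "((\<lambda>x. (1 + c) * (w x * Bernstein n k (log_warp c x))) has_integral
      (1 + c) * (1 / (real n + 1))) {0..1}"
    by (rule has_integral_mult_right)
  have "integral {0..1} (\<lambda>x. Bernstein n k (log_warp c x)) \<le> (1 + c) * (1 / (real n + 1))"
  proof (rule has_integral_le[OF integrable_integral subst])
    show "(\<lambda>x. Bernstein n k (log_warp c x)) integrable_on {0..1}"
      by (intro integrable_continuous_interval continuous_intros continuous_on_log_warp c)
    fix x :: real
    assume x: "x \<in> {0..1}"
    have "1 / (1 + c) \<le> w x"
      unfolding w_def using log_warp_derivative_ge[OF c] x by auto
    then have "1 \<le> (1 + c) * w x"
      using c by (simp add: pos_divide_le_eq mult.commute)
    then have "1 * Bernstein n k (log_warp c x) \<le> ((1 + c) * w x) * Bernstein n k (log_warp c x)"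
      using log_warp_bounds[OF c] x by (intro mult_right_mono Bernstein_nonneg) auto
    then show "Bernstein n k (log_warp c x) \<le> (1 + c) * (w x * Bernstein n k (log_warp c x))"
      by (simp add: mult.assoc)
  qed
  then show ?thesis by simp
qed

definition cell :: "nat \<Rightarrow> nat \<Rightarrow> real set" where
  "cell n k = {real k / real (n + 1) .. real (k + 1) / real (n + 1)}"

definition kant_warp :: "real \<Rightarrow> nat \<Rightarrow> (real \<Rightarrow> real) \<Rightarrow> real \<Rightarrow> real" where
  "kant_warp c n g x = (\<Sum>k\<le>n. Bernstein n k (log_warp c x) * (real (n + 1) * integral (cell n k) g))"

lemma cell_bounds_diff: "real (k + 1) / real (n + 1) - real k / real (n + 1) = 1 / real (n + 1)"
  by (simp add: diff_divide_distrib[symmetric])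

lemma cell_subset:
  assumes "k \<le> n"
  shows "cell n k \<subseteq> {0..1}"
proof -
  have "real (k + 1) / real (n + 1) \<le> 1"
    using assms by simp
  then show ?thesis
    unfolding cell_def by auto
qed

lemma integrable_on_cell:
  fixes g :: "real \<Rightarrow> 'a::banach"
  assumes "g integrable_on {0..1}" and "k \<le> n"
  shows "g integrable_on cell n k"
  using integrable_subinterval_real[OF assms(1) cell_subset[OF assms(2), unfolded cell_def]]
  unfolding cell_def .

lemma sum_integral_cells:
  fixes g :: "real \<Rightarrow> real"
  assumes g: "g integrable_on {0..1}"
  shows "(\<Sum>k\<le>n. integral (cell n k) g) = integral {0..1} g"
proof -
  have "(\<Sum>k<m. integral (cell n k) g) = integral {0..real m / real (n + 1)} g" if "m \<le> n + 1" for m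
    using that
  proof (induction m)
    case (Suc m)
    have "0 \<le> real m / real (n + 1)" "real m / real (n + 1) \<le> real (m + 1) / real (n + 1)"
      "real (m + 1) / real (n + 1) \<le> 1"
      using Suc.prems by (auto simp: divide_right_mono)
    then have "integral {0..real m / real (n + 1)} g + integral (cell n m) g
        = integral {0..real (m + 1) / real (n + 1)} g"
      unfolding cell_def using integrable_subinterval_real[OF g]
      by (intro Henstock_Kurzweil_Integration.integral_combine) auto
    with Suc show ?case by simp
  qed simp
  from this[of "n + 1"] show ?thesis
    by (simp add: lessThan_Suc_atMost)
qed

lemma continuous_on_kant_warp: "c > 0 \<Longrightarrow> continuous_on {0..1} (kant_warp c n g)"
  unfolding kant_warp_def by (intro continuous_intros continuous_on_log_warp)

lemma kant_warp_diff:
  assumes "g integrable_on {0..1}" and "h integrable_on {0..1}"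
  shows "kant_warp c n (\<lambda>t. g t - h t) x = kant_warp c n g x - kant_warp c n h x"
proof -
  have "integral (cell n k) (\<lambda>t. g t - h t) = integral (cell n k) g - integral (cell n k) h"
    if "k \<in> {..n}" for k
    using assms that by (intro integral_diff integrable_on_cell) auto
  then show ?thesis
    unfolding kant_warp_def sum_subtractf[symmetric] by (intro sum.cong refl) (simp add: right_diff_distrib)
qed

lemma kant_warp_abs_powr_le:
  assumes c: "c > 0" and p: "p \<ge> 1" and x: "x \<in> {0..1}"
    and g: "g integrable_on {0..1}" and gp: "(\<lambda>x. \<bar>g x\<bar> powr p) integrable_on {0..1}"
  shows "\<bar>kant_warp c n g x\<bar> powr p \<le>
    (\<Sum>k\<le>n. Bernstein n k (log_warp c x) * (real (n + 1) * integral (cell n k) (\<lambda>t. \<bar>g t\<bar> powr p)))"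
proof -
  have B: "0 \<le> Bernstein n k (log_warp c x)" for k
    using log_warp_bounds[OF c] x by (intro Bernstein_nonneg) auto
  have "\<bar>kant_warp c n g x\<bar> powr p
      \<le> (\<Sum>k\<le>n. Bernstein n k (log_warp c x) * \<bar>real (n + 1) * integral (cell n k) g\<bar> powr p)"
    unfolding kant_warp_def by (rule jensen_abs_powr_sum[OF p]) (auto simp: B)
  also have "\<dots> \<le> (\<Sum>k\<le>n. Bernstein n k (log_warp c x) *
      (real (n + 1) * integral (cell n k) (\<lambda>t. \<bar>g t\<bar> powr p)))"
  proof (intro sum_mono mult_left_mono B)
    fix k
    assume "k \<in> {..n}"
    then have k: "k \<le> n" by simp
    have "real k / real (n + 1) < real (k + 1) / real (n + 1)"
      by (simp add: divide_strict_right_mono)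
    from jensen_abs_powr_integral[OF p this integrable_on_cell[OF g k, unfolded cell_def]
        integrable_on_cell[OF gp k, unfolded cell_def]]
    have "\<bar>integral (cell n k) g / (1 / real (n + 1))\<bar> powr p
        \<le> integral (cell n k) (\<lambda>t. \<bar>g t\<bar> powr p) / (1 / real (n + 1))"
      unfolding cell_bounds_diff cell_def .
    then show "\<bar>real (n + 1) * integral (cell n k) g\<bar> powr p
        \<le> real (n + 1) * integral (cell n k) (\<lambda>t. \<bar>g t\<bar> powr p)"
      by (simp add: cell_def cell_bounds_diff mult.commute)
  qed
  finally show ?thesis .
qed

lemma integrable_kant_warp_abs_powr:
  "c > 0 \<Longrightarrow> p \<ge> 1 \<Longrightarrow> (\<lambda>x. \<bar>kant_warp c n g x\<bar> powr p) integrable_on {0..1}"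
  by (intro integrable_continuous_interval continuous_on_powr' continuous_intros continuous_on_kant_warp) auto

lemma integral_kant_warp_abs_powr_le:
  assumes c: "c > 0" and p: "p \<ge> 1"
    and g: "g integrable_on {0..1}" and gp: "(\<lambda>x. \<bar>g x\<bar> powr p) integrable_on {0..1}"
  shows "integral {0..1} (\<lambda>x. \<bar>kant_warp c n g x\<bar> powr p) \<le> (1 + c) * integral {0..1} (\<lambda>x. \<bar>g x\<bar> powr p)"
proof -
  define J where "J k = real (n + 1) * integral (cell n k) (\<lambda>t. \<bar>g t\<bar> powr p)" for k
  have J: "0 \<le> J k" if "k \<le> n" for k
    unfolding J_def using integrable_on_cell[OF gp that] by (intro mult_nonneg_nonneg integral_nonneg) auto
  have Bi: "(\<lambda>x. Bernstein n k (log_warp c x)) integrable_on {0..1}" for k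
    by (intro integrable_continuous_interval continuous_intros continuous_on_log_warp c)
  have "integral {0..1} (\<lambda>x. \<bar>kant_warp c n g x\<bar> powr p)
      \<le> integral {0..1} (\<lambda>x. \<Sum>k\<le>n. Bernstein n k (log_warp c x) * J k)"
    using kant_warp_abs_powr_le[OF c p _ g gp] unfolding J_def
    by (intro integral_le integrable_kant_warp_abs_powr c p integrable_sum integrable_on_mult_left Bi) auto
  also have "\<dots> = (\<Sum>k\<le>n. integral {0..1} (\<lambda>x. Bernstein n k (log_warp c x)) * J k)"
    by (simp add: integral_sum integrable_on_mult_left Bi)
  also have "\<dots> \<le> (\<Sum>k\<le>n. (1 + c) / (real n + 1) * J k)"
    using integral_Bernstein_log_warp_le[OF c] J by (intro sum_mono mult_right_mono) auto
  also have "\<dots> = (1 + c) * (\<Sum>k\<le>n. integral (cell n k) (\<lambda>t. \<bar>g t\<bar> powr p))"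
    by (simp add: J_def sum_distrib_left add.commute)
  also have "\<dots> = (1 + c) * integral {0..1} (\<lambda>x. \<bar>g x\<bar> powr p)"
    by (simp add: sum_integral_cells[OF gp])
  finally show ?thesis .
qed

section \<open>Uniform convergence on continuous functions\<close>

lemma continuous_on_quadratic_modulus:
  fixes h :: "real \<Rightarrow> real"
  assumes S: "compact S" and h: "continuous_on S h" and e: "e > 0"
  obtains K where "K \<ge> 0" "\<And>s x. s \<in> S \<Longrightarrow> x \<in> S \<Longrightarrow> \<bar>h s - h x\<bar> \<le> e + K * (s - x)\<^sup>2"
proof -
  obtain M where M: "\<And>x. x \<in> S \<Longrightarrow> \<bar>h x\<bar> \<le> M"
    using compact_imp_bounded[OF compact_continuous_image[OF h S]] by (auto simp: bounded_iff)
  obtain d where d: "d > 0" "\<And>s x. s \<in> S \<Longrightarrow> x \<in> S \<Longrightarrow> \<bar>s - x\<bar> < d \<Longrightarrow> \<bar>h s - h x\<bar> < e"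
    using compact_uniformly_continuous[OF h S] e
    by (auto simp: uniformly_continuous_on_def dist_real_def)
  show ?thesis
  proof (rule that[of "2 * \<bar>M\<bar> / d\<^sup>2"])
    fix s x
    assume sx: "s \<in> S" "x \<in> S"
    show "\<bar>h s - h x\<bar> \<le> e + 2 * \<bar>M\<bar> / d\<^sup>2 * (s - x)\<^sup>2"
    proof (cases "\<bar>s - x\<bar> < d")
      case True
      have "0 \<le> 2 * \<bar>M\<bar> / d\<^sup>2 * (s - x)\<^sup>2"
        by simp
      with d(2)[OF sx True] show ?thesis by linarith
    next
      case False
      then have "\<bar>d\<bar> \<le> \<bar>s - x\<bar>"
        using d(1) by simp
      then have "d\<^sup>2 \<le> (s - x)\<^sup>2"
        by (simp only: abs_le_square_iff)
      then have "2 * \<bar>M\<bar> \<le> 2 * \<bar>M\<bar> / d\<^sup>2 * (s - x)\<^sup>2"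
        using d(1) by (simp add: field_simps mult_left_mono)
      moreover have "\<bar>h s - h x\<bar> \<le> 2 * \<bar>M\<bar>"
        using M[OF sx(1)] M[OF sx(2)] by linarith
      ultimately show ?thesis using e by linarith
    qed
  qed simp
qed

lemma integral_average_dev_le:
  fixes h :: "real \<Rightarrow> real"
  assumes ab: "a < b" and h: "h integrable_on {a..b}" and dev: "\<And>t. t \<in> {a..b} \<Longrightarrow> \<bar>h t - y\<bar> \<le> D"
  shows "\<bar>integral {a..b} h / (b - a) - y\<bar> \<le> D"
proof -
  have "integral {a..b} (\<lambda>t. h t - y) = integral {a..b} h - (b - a) * y"
    by (subst integral_diff) (use ab h in auto)
  moreover have "norm (integral {a..b} (\<lambda>t. h t - y)) \<le> integral {a..b} (\<lambda>t. D)"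
    using dev by (intro integral_norm_bound_integral integrable_diff h) auto
  ultimately have "\<bar>integral {a..b} h - (b - a) * y\<bar> \<le> (b - a) * D"
    using ab by simp
  then show ?thesis
    using ab by (simp add: abs_le_iff field_simps)
qed

lemma cell_dist:
  assumes n: "n > 0" and t: "t \<in> cell n k" "t \<le> 1"
  shows "\<bar>t - real k / real n\<bar> \<le> 1 / real n"
proof -
  have t_bounds: "real k / real (n + 1) \<le> t" "t \<le> real (k + 1) / real (n + 1)"
    using t(1) by (auto simp: cell_def)
  then have "real k \<le> t * (real n + 1)" "t * (real n + 1) \<le> real k + 1"
    by (simp_all add: field_simps)
  moreover have "0 \<le> real k / real (n + 1)"
    by simp
  with t_bounds(1) have "0 \<le> t"
    by linarith
  ultimately have "\<bar>real n * t - real k\<bar> \<le> 1"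
    using t(2) by (simp add: algebra_simps)
  moreover have "t - real k / real n = (real n * t - real k) / real n"
    using n by (simp add: field_simps)
  ultimately show ?thesis
    using n by (simp add: divide_right_mono)
qed

lemma cell_average_dev_le:
  fixes h :: "real \<Rightarrow> real"
  assumes h: "h integrable_on {0..1}" and K: "K \<ge> 0"
    and modulus: "\<And>s. s \<in> {0..1} \<Longrightarrow> \<bar>h s - h x\<bar> \<le> e + K * (s - x)\<^sup>2"
    and n: "n > 0" and k: "k \<le> n" and y: "\<bar>y - x\<bar> \<le> 1 / real n"
  shows "\<bar>real (n + 1) * integral (cell n k) h - h x\<bar>
    \<le> e + K * (8 / (real n)\<^sup>2 + 2 * (real k / real n - y)\<^sup>2)"
proof -
  have sum_sq_le: "(a + b)\<^sup>2 \<le> 2 * a\<^sup>2 + 2 * b\<^sup>2" for a b :: real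
    using zero_le_power2[of "a - b"] unfolding power2_eq_square by (simp add: algebra_simps)
  have "\<bar>h t - h x\<bar> \<le> e + K * (8 / (real n)\<^sup>2 + 2 * (real k / real n - y)\<^sup>2)"
    if t: "t \<in> cell n k" for t
  proof -
    have t01: "t \<in> {0..1}" using cell_subset[OF k] t by auto
    have "\<bar>t - x\<bar> \<le> 2 / real n + \<bar>real k / real n - y\<bar>"
      using cell_dist[OF n t] t01 y by auto
    then have "(t - x)\<^sup>2 \<le> (2 / real n + \<bar>real k / real n - y\<bar>)\<^sup>2"
      by (metis abs_ge_zero power2_abs power_mono)
    also have "\<dots> \<le> 2 * (2 / real n)\<^sup>2 + 2 * \<bar>real k / real n - y\<bar>\<^sup>2"
      by (rule sum_sq_le)
    also have "\<dots> = 8 / (real n)\<^sup>2 + 2 * (real k / real n - y)\<^sup>2"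
      by (simp add: power_divide)
    finally have "K * (t - x)\<^sup>2 \<le> K * (8 / (real n)\<^sup>2 + 2 * (real k / real n - y)\<^sup>2)"
      using K by (rule mult_left_mono)
    with modulus[OF t01] show ?thesis
      by linarith
  qed
  moreover have "real k / real (n + 1) < real (k + 1) / real (n + 1)"
    by (simp add: divide_strict_right_mono)
  ultimately have "\<bar>integral (cell n k) h / (1 / real (n + 1)) - h x\<bar>
      \<le> e + K * (8 / (real n)\<^sup>2 + 2 * (real k / real n - y)\<^sup>2)"
    using integral_average_dev_le[OF _ integrable_on_cell[OF h k, unfolded cell_def]]
    unfolding cell_bounds_diff cell_def by blast
  then show ?thesis by (simp add: mult.commute)
qed

lemma kant_warp_dev_le:
  fixes h :: "real \<Rightarrow> real"
  assumes h: "h integrable_on {0..1}" and K: "K \<ge> 0"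
    and modulus: "\<And>s. s \<in> {0..1} \<Longrightarrow> \<bar>h s - h x\<bar> \<le> e + K * (s - x)\<^sup>2"
    and n: "n > 0" and c: "0 < c" "c \<le> 1 / real n" and x: "x \<in> {0..1}"
  shows "\<bar>kant_warp c n h x - h x\<bar> \<le> e + 10 * K / real n"
proof -
  define y where "y = log_warp c x"
  have y: "0 \<le> y" "y \<le> 1" "\<bar>y - x\<bar> \<le> 1 / real n"
    using log_warp_bounds[OF c(1)] log_warp_dist[OF c(1)] x c(2) by (force simp: y_def)+
  define D where "D k = e + K * (8 / (real n)\<^sup>2 + 2 * (real k / real n - y)\<^sup>2)" for k
  have cell_dev: "\<bar>real (n + 1) * integral (cell n k) h - h x\<bar> \<le> D k" if "k \<le> n" for k
    unfolding D_def using cell_average_dev_le[OF h K modulus n that y(3)] .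
  have "kant_warp c n h x - h x = (\<Sum>k\<le>n. Bernstein n k y * (real (n + 1) * integral (cell n k) h - h x))"
    by (simp add: kant_warp_def y_def right_diff_distrib sum_subtractf flip: sum_distrib_right)
  also have "\<bar>\<dots>\<bar> \<le> (\<Sum>k\<le>n. Bernstein n k y * D k)"
    using cell_dev Bernstein_nonneg[OF y(1,2)]
    by (intro order_trans[OF sum_abs] sum_mono) (simp add: abs_mult mult_left_mono)
  also have "\<dots> = (\<Sum>k\<le>n. Bernstein n k y * (e + 8 * K / (real n)\<^sup>2)
      + 2 * K * (Bernstein n k y * (real k / real n - y)\<^sup>2))"
    unfolding D_def by (intro sum.cong refl) (simp add: algebra_simps)
  also have "\<dots> = e + 8 * K / (real n)\<^sup>2 + 2 * K * (\<Sum>k\<le>n. Bernstein n k y * (real k / real n - y)\<^sup>2)"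
    by (simp add: sum.distrib flip: sum_distrib_left sum_distrib_right)
  also have "\<dots> = e + 8 * K / (real n)\<^sup>2 + 2 * K * (y * (1 - y) / real n)"
    by (simp add: sum_Bernstein_sq_dev[OF n])
  also have "\<dots> \<le> e + 8 * K / real n + 2 * K * (1 / real n)"
  proof -
    have "8 * K / (real n)\<^sup>2 \<le> 8 * K / real n"
      using n K by (intro divide_left_mono) (auto simp: power2_eq_square)
    moreover have "2 * K * (y * (1 - y) / real n) \<le> 2 * K * (1 / real n)"
      using y K by (intro mult_left_mono divide_right_mono) (auto simp: mult_le_one)
    ultimately show ?thesis
      by linarith
  qed
  also have "\<dots> = e + 10 * K / real n"
    by (simp add: field_simps)
  finally show ?thesis .
qed

lemma kant_warp_uniform_approx:
  fixes h :: "real \<Rightarrow> real"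
  assumes h: "continuous_on {0..1} h" and e: "e > 0"
  obtains N where "\<And>n c x. N \<le> n \<Longrightarrow> 0 < c \<Longrightarrow> c \<le> 1 / real n \<Longrightarrow> x \<in> {0..1} \<Longrightarrow>
    \<bar>kant_warp c n h x - h x\<bar> \<le> e"
proof -
  obtain K where K: "K \<ge> 0" "\<And>s x. s \<in> {0..1} \<Longrightarrow> x \<in> {0..1} \<Longrightarrow> \<bar>h s - h x\<bar> \<le> e / 2 + K * (s - x)\<^sup>2"
    using continuous_on_quadratic_modulus[OF compact_Icc h, of "e / 2"] e by auto
  obtain N :: nat where N: "20 * K / e < real N"
    using reals_Archimedean2 by blast
  show ?thesis
  proof (rule that[of "Suc N"])
    fix n :: nat and c x :: real
    assume n: "Suc N \<le> n" and c: "0 < c" "c \<le> 1 / real n" and x: "x \<in> {0..1}"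
    have "\<bar>kant_warp c n h x - h x\<bar> \<le> e / 2 + 10 * K / real n"
      using n c x K by (intro kant_warp_dev_le integrable_continuous_interval h) auto
    also have "10 * K / real n \<le> e / 2"
    proof -
      have "20 * K / e < real n"
        using N n by linarith
      with e n show ?thesis
        by (simp add: field_simps)
    qed
    finally show "\<bar>kant_warp c n h x - h x\<bar> \<le> e" by simp
  qed
qed

section \<open>Approximation in \<open>L\<^sup>p\<close>\<close>

lemma abs_powr_diff_integrable_on:
  fixes f g :: "real \<Rightarrow> real"
  assumes p: "p \<ge> 1" and S: "S \<in> sets lebesgue"
    and f: "f \<in> borel_measurable (lebesgue_on S)" "(\<lambda>x. \<bar>f x\<bar> powr p) integrable_on S"
    and g: "g \<in> borel_measurable (lebesgue_on S)" "(\<lambda>x. \<bar>g x\<bar> powr p) integrable_on S"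
  shows "(\<lambda>x. \<bar>f x - g x\<bar> powr p) integrable_on S"
proof (rule measurable_bounded_by_integrable_imp_integrable[OF _ _ _ S])
  show "(\<lambda>x. \<bar>f x - g x\<bar> powr p) \<in> borel_measurable (lebesgue_on S)"
    using f g by measurable
  show "(\<lambda>x. 2 powr p * (\<bar>f x\<bar> powr p + \<bar>g x\<bar> powr p)) integrable_on S"
    by (intro integrable_on_mult_right integrable_add f g)
  show "norm (\<bar>f x - g x\<bar> powr p) \<le> 2 powr p * (\<bar>f x\<bar> powr p + \<bar>g x\<bar> powr p)" for x
    using abs_powr_add_le[OF p, of "f x" "- g x"] by simp
qed

lemma abs_powr_integrable_imp_integrable_on:
  fixes g :: "real \<Rightarrow> real"
  assumes p: "p \<ge> 1" and g: "g \<in> borel_measurable (lebesgue_on {a..b})"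
    and gp: "(\<lambda>x. \<bar>g x\<bar> powr p) integrable_on {a..b}"
  shows "g integrable_on {a..b}"
proof (rule measurable_bounded_by_integrable_imp_integrable[OF g])
  show "(\<lambda>x. 1 + \<bar>g x\<bar> powr p) integrable_on {a..b}"
    by (intro integrable_add gp integrable_const_ivl)
  show "norm (g x) \<le> 1 + \<bar>g x\<bar> powr p" for x
    using abs_le_one_plus_abs_powr[OF p] by simp
qed simp

lemma Lp_truncation_approx:
  fixes g :: "real \<Rightarrow> real"
  assumes p: "p \<ge> 1" and g: "g \<in> borel_measurable (lebesgue_on {0..1})"
    and gp: "(\<lambda>x. \<bar>g x\<bar> powr p) integrable_on {0..1}" and e: "e > 0"
  obtains M :: real where
    "(\<lambda>x. \<bar>g x - max (- M) (min M (g x))\<bar> powr p) integrable_on {0..1}"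
    "integral {0..1} (\<lambda>x. \<bar>g x - max (- M) (min M (g x))\<bar> powr p) < e"
proof -
  define F where "F M x = \<bar>g x - max (- real M) (min (real M) (g x))\<bar> powr p" for M :: nat and x
  have F_le: "norm (F M x) \<le> \<bar>g x\<bar> powr p" for M x
  proof -
    have "\<bar>g x - max (- real M) (min (real M) (g x))\<bar> \<le> \<bar>g x\<bar>"
      by auto
    then show ?thesis
      unfolding F_def using p by (simp add: powr_mono2)
  qed
  have F_int: "F M integrable_on {0..1}" for M
    using g F_le unfolding F_def
    by (intro measurable_bounded_by_integrable_imp_integrable[OF _ gp]) auto
  have "(\<lambda>M. F M x) \<longlonglongrightarrow> 0" for x
  proof (rule tendsto_eventually)
    obtain N :: nat where "\<bar>g x\<bar> \<le> real N"
      using real_arch_simple by blast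
    then show "\<forall>\<^sub>F M in sequentially. F M x = 0"
      unfolding F_def by (intro eventually_sequentiallyI[of N]) auto
  qed
  then have "(\<lambda>M. integral {0..1} (F M)) \<longlonglongrightarrow> integral {0..1} (\<lambda>x::real. 0::real)"
    using F_le by (intro Equivalence_Lebesgue_Henstock_Integration.dominated_convergence(2)[OF F_int gp]) auto
  then have "\<forall>\<^sub>F M in sequentially. integral {0..1} (F M) < e"
    using e by (intro order_tendstoD(2)) auto
  then obtain M where "integral {0..1} (F M) < e"
    by (auto simp: eventually_sequentially)
  with F_int[of M] show ?thesis
    unfolding F_def by (intro that[of "real M"]) auto
qed

lemma dominated_convergence_off_negligible:
  fixes f :: "nat \<Rightarrow> 'n::euclidean_space \<Rightarrow> 'm::euclidean_space"
  assumes N: "negligible N" and f: "\<And>k. f k integrable_on S" and h: "h integrable_on S"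
    and le: "\<And>k x. x \<in> S \<Longrightarrow> norm (f k x) \<le> h x"
    and lim: "\<And>x. x \<in> S - N \<Longrightarrow> (\<lambda>k. f k x) \<longlonglongrightarrow> g x"
  shows "(\<lambda>k. integral S (f k)) \<longlonglongrightarrow> integral S g"
proof -
  have spike: "negligible {x \<in> S - (S - N). P x}" "negligible {x \<in> (S - N) - S. P x}" for P
    by (rule negligible_subset[OF N]; auto)+
  have "f k integrable_on S - N" for k
    by (rule integrable_spike_set[OF f spike])
  moreover have "h integrable_on S - N"
    by (rule integrable_spike_set[OF h spike])
  ultimately have "(\<lambda>k. integral (S - N) (f k)) \<longlonglongrightarrow> integral (S - N) g"
    using le lim by (rule Equivalence_Lebesgue_Henstock_Integration.dominated_convergence(2)) auto
  moreover have "integral (S - N) u = integral S u" for u :: "'n \<Rightarrow> 'm"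
    by (rule integral_spike_set) (rule spike)+
  ultimately show ?thesis
    by simp
qed

lemma bounded_Lp_continuous_approx:
  fixes G :: "real \<Rightarrow> real"
  assumes p: "p \<ge> 1" and G: "G \<in> borel_measurable (lebesgue_on {0..1})"
    and B: "\<And>x. \<bar>G x\<bar> \<le> B" and e: "e > 0"
  obtains h where "continuous_on UNIV h" "(\<lambda>x. \<bar>G x - h x\<bar> powr p) integrable_on {0..1}"
    "integral {0..1} (\<lambda>x. \<bar>G x - h x\<bar> powr p) < e"
proof -
  have "G measurable_on {0..1}"
    using G by (simp add: measurable_on_iff_borel_measurable)
  then obtain N F where N: "negligible N" and F: "\<And>n. continuous_on UNIV (F n)"
    and F_lim: "\<And>x. x \<notin> N \<Longrightarrow> (\<lambda>n. F n x) \<longlonglongrightarrow> (if x \<in> {0..1} then G x else 0)"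
    unfolding measurable_on_def by blast
  \<comment> \<open>clipping at level \<open>B\<close> keeps the approximants continuous and uniformly bounded\<close>
  define H where "H n x = max (- B) (min B (F n x))" for n x
  have H: "continuous_on UNIV (H n)" for n
    unfolding H_def by (intro continuous_intros F)
  define P where "P n x = \<bar>G x - H n x\<bar> powr p" for n x
  have P_le: "norm (P n x) \<le> (2 * B) powr p" for n x
  proof -
    have "\<bar>G x - H n x\<bar> \<le> 2 * B" using B[of x] by (auto simp: H_def)
    then show ?thesis unfolding P_def using p by (simp add: powr_mono2)
  qed
  have P_int: "P n integrable_on {0..1}" for n
  proof (rule measurable_bounded_by_integrable_imp_integrable)
    have "H n \<in> borel_measurable (lebesgue_on {0..1})"
      by (rule continuous_imp_measurable_on_sets_lebesgue[OF continuous_on_subset[OF H]]) auto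
    then show "P n \<in> borel_measurable (lebesgue_on {0..1})"
      unfolding P_def using G by measurable
    show "norm (P n x) \<le> (2 * B) powr p" for x
      by (rule P_le)
  qed auto
  have "(\<lambda>n. P n x) \<longlonglongrightarrow> 0" if "x \<in> {0..1} - N" for x
  proof -
    have "(\<lambda>n. H n x) \<longlonglongrightarrow> max (- B) (min B (G x))"
      using F_lim[of x] that unfolding H_def by (auto intro!: tendsto_intros)
    also have "max (- B) (min B (G x)) = G x"
      using B[of x] by auto
    finally have "(\<lambda>n. \<bar>G x - H n x\<bar>) \<longlonglongrightarrow> 0"
      by (intro tendsto_rabs_zero tendsto_eq_intros) auto
    then show ?thesis
      unfolding P_def using p by (intro tendsto_zero_powrI) auto
  qed
  then have "(\<lambda>n. integral {0..1} (P n)) \<longlonglongrightarrow> integral {0..1} (\<lambda>x::real. 0::real)"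
    using P_le by (intro dominated_convergence_off_negligible[OF N P_int integrable_const_ivl]) auto
  then have "\<forall>\<^sub>F n in sequentially. integral {0..1} (P n) < e"
    using e by (intro order_tendstoD(2)) auto
  then obtain n where "integral {0..1} (P n) < e"
    by (auto simp: eventually_sequentially)
  with P_int[of n] H[of n] show ?thesis
    unfolding P_def by (intro that[of "H n"])
qed

lemma continuous_dense_Lp:
  fixes g :: "real \<Rightarrow> real"
  assumes p: "p \<ge> 1" and g: "g \<in> borel_measurable (lebesgue_on {0..1})"
    and gp: "(\<lambda>x. \<bar>g x\<bar> powr p) integrable_on {0..1}" and e: "e > 0"
  obtains h where "continuous_on UNIV h" "(\<lambda>x. \<bar>g x - h x\<bar> powr p) integrable_on {0..1}"
    "integral {0..1} (\<lambda>x. \<bar>g x - h x\<bar> powr p) < e"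
proof -
  define e' where "e' = e / (2 * 2 powr p)"
  have e': "e' > 0" using e by (simp add: e'_def)
  obtain M where M_int: "(\<lambda>x. \<bar>g x - max (- M) (min M (g x))\<bar> powr p) integrable_on {0..1}"
    and M_small: "integral {0..1} (\<lambda>x. \<bar>g x - max (- M) (min M (g x))\<bar> powr p) < e'"
    using Lp_truncation_approx[OF p g gp e'] by blast
  define G where "G x = max (- M) (min M (g x))" for x
  have G: "G \<in> borel_measurable (lebesgue_on {0..1})"
    unfolding G_def using g by measurable
  have "\<bar>G x\<bar> \<le> \<bar>M\<bar>" for x
    by (auto simp: G_def)
  then obtain h where h: "continuous_on UNIV h"
    and h_int: "(\<lambda>x. \<bar>G x - h x\<bar> powr p) integrable_on {0..1}"
    and h_small: "integral {0..1} (\<lambda>x. \<bar>G x - h x\<bar> powr p) < e'"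
    using bounded_Lp_continuous_approx[OF p G _ e'] by blast
  have h_meas: "h \<in> borel_measurable (lebesgue_on {0..1})"
    by (rule continuous_imp_measurable_on_sets_lebesgue[OF continuous_on_subset[OF h]]) auto
  have gG_int: "(\<lambda>x. \<bar>g x - G x\<bar> powr p) integrable_on {0..1}"
    and gG_small: "integral {0..1} (\<lambda>x. \<bar>g x - G x\<bar> powr p) < e'"
    using M_int M_small by (simp_all add: G_def)
  have bound: "\<bar>g x - h x\<bar> powr p \<le> 2 powr p * (\<bar>g x - G x\<bar> powr p + \<bar>G x - h x\<bar> powr p)" for x
    using abs_powr_add_le[OF p, of "g x - G x" "G x - h x"] by simp
  have gh_int: "(\<lambda>x. \<bar>g x - h x\<bar> powr p) integrable_on {0..1}"
  proof (rule measurable_bounded_by_integrable_imp_integrable)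
    show "(\<lambda>x. \<bar>g x - h x\<bar> powr p) \<in> borel_measurable (lebesgue_on {0..1})"
      using g h_meas by measurable
    show "(\<lambda>x. 2 powr p * (\<bar>g x - G x\<bar> powr p + \<bar>G x - h x\<bar> powr p)) integrable_on {0..1}"
      by (intro integrable_on_mult_right integrable_add gG_int h_int)
    show "norm (\<bar>g x - h x\<bar> powr p) \<le> 2 powr p * (\<bar>g x - G x\<bar> powr p + \<bar>G x - h x\<bar> powr p)" for x
      using bound[of x] by simp
  qed simp
  have "integral {0..1} (\<lambda>x. \<bar>g x - h x\<bar> powr p)
      \<le> integral {0..1} (\<lambda>x. 2 powr p * (\<bar>g x - G x\<bar> powr p + \<bar>G x - h x\<bar> powr p))"
    by (intro integral_le gh_int bound integrable_on_mult_right integrable_add gG_int h_int)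
  also have "\<dots> = 2 powr p * (integral {0..1} (\<lambda>x. \<bar>g x - G x\<bar> powr p)
      + integral {0..1} (\<lambda>x. \<bar>G x - h x\<bar> powr p))"
    using gG_int h_int by (simp add: integral_add)
  also have "\<dots> < 2 powr p * (e' + e')"
    using gG_small h_small by (intro mult_strict_left_mono add_strict_mono) auto
  also have "\<dots> = e"
    by (simp add: e'_def)
  finally show ?thesis
    using h gh_int by (intro that[of h])
qed

lemma kant_warp_dev_abs_powr_integrable:
  fixes g :: "real \<Rightarrow> real"
  assumes c: "c > 0" and p: "p \<ge> 1" and g: "g \<in> borel_measurable (lebesgue_on {0..1})"
    and gp: "(\<lambda>x. \<bar>g x\<bar> powr p) integrable_on {0..1}"
  shows "(\<lambda>x. \<bar>kant_warp c n g x - g x\<bar> powr p) integrable_on {0..1}"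
proof (rule abs_powr_diff_integrable_on[OF p _ _ _ g gp])
  show "kant_warp c n g \<in> borel_measurable (lebesgue_on {0..1})"
    by (intro continuous_imp_measurable_on_sets_lebesgue continuous_on_kant_warp c) auto
qed (use integrable_kant_warp_abs_powr[OF c p] in auto)

lemma integral_kant_warp_dev_le:
  fixes g h :: "real \<Rightarrow> real"
  assumes c: "0 < c" "c \<le> 1" and p: "p \<ge> 1" and g: "g \<in> borel_measurable (lebesgue_on {0..1})"
    and gp: "(\<lambda>x. \<bar>g x\<bar> powr p) integrable_on {0..1}" and h: "continuous_on {0..1} h"
  shows "integral {0..1} (\<lambda>x. \<bar>kant_warp c n g x - g x\<bar> powr p)
    \<le> 4 powr p * (3 * integral {0..1} (\<lambda>x. \<bar>g x - h x\<bar> powr p)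
                   + integral {0..1} (\<lambda>x. \<bar>kant_warp c n h x - h x\<bar> powr p))"
proof -
  have h_meas: "h \<in> borel_measurable (lebesgue_on {0..1})"
    by (rule continuous_imp_measurable_on_sets_lebesgue[OF h]) auto
  have hp: "(\<lambda>x. \<bar>h x\<bar> powr p) integrable_on {0..1}"
    using p by (intro integrable_continuous_interval continuous_on_powr' continuous_intros h) auto
  have g_int: "g integrable_on {0..1}" and h_int: "h integrable_on {0..1}"
    using abs_powr_integrable_imp_integrable_on[OF p] g gp h_meas hp by auto
  define A where "A x = \<bar>kant_warp c n (\<lambda>t. g t - h t) x\<bar> powr p" for x
  define B where "B x = \<bar>kant_warp c n h x - h x\<bar> powr p" for x
  define D where "D x = \<bar>g x - h x\<bar> powr p" for x
  have D_int: "D integrable_on {0..1}"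
    unfolding D_def by (rule abs_powr_diff_integrable_on[OF p _ g gp h_meas hp]) auto
  have gh_int: "(\<lambda>t. g t - h t) integrable_on {0..1}"
    by (intro integrable_diff g_int h_int)
  have A_int: "A integrable_on {0..1}"
    unfolding A_def by (rule integrable_kant_warp_abs_powr[OF c(1) p])
  have "integral {0..1} A \<le> (1 + c) * integral {0..1} D"
    unfolding A_def D_def by (rule integral_kant_warp_abs_powr_le[OF c(1) p gh_int D_int[unfolded D_def]])
  also have "\<dots> \<le> 2 * integral {0..1} D"
    using c D_int by (intro mult_right_mono integral_nonneg) (auto simp: D_def)
  finally have A_le: "integral {0..1} A \<le> 2 * integral {0..1} D" .
  have B_int: "B integrable_on {0..1}"
    unfolding B_def by (rule kant_warp_dev_abs_powr_integrable[OF c(1) p h_meas hp])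
  have pointwise: "\<bar>kant_warp c n g x - g x\<bar> powr p \<le> 4 powr p * (A x + B x + D x)" for x
  proof -
    have "kant_warp c n g x - g x
        = kant_warp c n (\<lambda>t. g t - h t) x + (kant_warp c n h x - h x) + (h x - g x)"
      using kant_warp_diff[OF g_int h_int] by simp
    then show ?thesis
      using abs_powr_add3_le[OF p] unfolding A_def B_def D_def by (metis abs_minus_commute)
  qed
  have "integral {0..1} (\<lambda>x. \<bar>kant_warp c n g x - g x\<bar> powr p)
      \<le> integral {0..1} (\<lambda>x. 4 powr p * (A x + B x + D x))"
    using pointwise
    by (intro integral_le kant_warp_dev_abs_powr_integrable[OF c(1) p g gp]
        integrable_on_mult_right integrable_add A_int B_int D_int)
  also have "\<dots> = 4 powr p * (integral {0..1} A + integral {0..1} B + integral {0..1} D)"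
    using A_int B_int D_int by (simp add: integral_add integrable_add)
  also have "\<dots> \<le> 4 powr p * (3 * integral {0..1} D + integral {0..1} B)"
    using A_le by (intro mult_left_mono) auto
  finally show ?thesis
    by (simp only: B_def[abs_def] D_def[abs_def])
qed

lemma kant_warp_Lp_tendsto:
  fixes g :: "real \<Rightarrow> real" and c :: "nat \<Rightarrow> real"
  assumes p: "p \<ge> 1" and g: "g \<in> borel_measurable (lebesgue_on {0..1})"
    and gp: "(\<lambda>x. \<bar>g x\<bar> powr p) integrable_on {0..1}"
    and c: "\<And>n. 0 < c n" "\<And>n. c n \<le> 1 / real (n + 1)"
  shows "(\<lambda>n. integral {0..1} (\<lambda>x. \<bar>kant_warp (c n) n g x - g x\<bar> powr p)) \<longlonglongrightarrow> 0"
proof (rule LIMSEQ_I)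
  fix r :: real
  assume r: "r > 0"
  define q :: real where "q = 4 powr p"
  have q: "q > 0" by (simp add: q_def)
  obtain h where h: "continuous_on UNIV h"
    and gh_small: "integral {0..1} (\<lambda>x. \<bar>g x - h x\<bar> powr p) < r / (8 * q)"
    using continuous_dense_Lp[OF p g gp, of "r / (8 * q)"] r q by auto
  have h01: "continuous_on {0..1} h"
    using h by (rule continuous_on_subset) simp
  have h_meas: "h \<in> borel_measurable (lebesgue_on {0..1})"
    by (rule continuous_imp_measurable_on_sets_lebesgue[OF h01]) auto
  have hp: "(\<lambda>x. \<bar>h x\<bar> powr p) integrable_on {0..1}"
    using p by (intro integrable_continuous_interval continuous_on_powr' continuous_intros h01) auto
  define \<delta> where "\<delta> = min 1 (r / (4 * q))"
  have \<delta>: "0 < \<delta>" "\<delta> powr p \<le> r / (4 * q)"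
    using r q p powr_mono'[of 1 p "min 1 (r / (4 * q))"] by (auto simp: \<delta>_def)
  obtain N where N: "\<And>n c x. N \<le> n \<Longrightarrow> 0 < c \<Longrightarrow> c \<le> 1 / real n \<Longrightarrow> x \<in> {0..1} \<Longrightarrow>
      \<bar>kant_warp c n h x - h x\<bar> \<le> \<delta>"
    using kant_warp_uniform_approx[OF h01 \<delta>(1)] by blast
  show "\<exists>N'. \<forall>n\<ge>N'. norm (integral {0..1} (\<lambda>x. \<bar>kant_warp (c n) n g x - g x\<bar> powr p) - 0) < r"
  proof (intro exI allI impI)
    fix n
    assume n: "max N 1 \<le> n"
    have cn: "0 < c n" "c n \<le> 1 / real n" "c n \<le> 1"
      using c[of n] n order_trans[OF c(2)[of n]] by (auto simp: frac_le)
    have "\<bar>kant_warp (c n) n h x - h x\<bar> powr p \<le> \<delta> powr p" if "x \<in> {0..1}" for x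
      using N[OF _ cn(1,2) that] n p by (intro powr_mono2) auto
    then have "integral {0..1} (\<lambda>x. \<bar>kant_warp (c n) n h x - h x\<bar> powr p) \<le> integral {0..1} (\<lambda>x::real. \<delta> powr p)"
      by (intro integral_le kant_warp_dev_abs_powr_integrable[OF cn(1) p h_meas hp] integrable_const_ivl)
    then have Th_small: "integral {0..1} (\<lambda>x. \<bar>kant_warp (c n) n h x - h x\<bar> powr p) \<le> r / (4 * q)"
      using \<delta>(2) by simp
    have dev_nonneg: "0 \<le> integral {0..1} (\<lambda>x. \<bar>kant_warp (c n) n g x - g x\<bar> powr p)"
      by (intro integral_nonneg kant_warp_dev_abs_powr_integrable cn p g gp) auto
    have "integral {0..1} (\<lambda>x. \<bar>kant_warp (c n) n g x - g x\<bar> powr p)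
        \<le> q * (3 * integral {0..1} (\<lambda>x. \<bar>g x - h x\<bar> powr p)
                + integral {0..1} (\<lambda>x. \<bar>kant_warp (c n) n h x - h x\<bar> powr p))"
      unfolding q_def by (rule integral_kant_warp_dev_le[OF cn(1,3) p g gp h01])
    also have "\<dots> < q * (3 * (r / (8 * q)) + r / (4 * q))"
      using gh_small Th_small q by (intro mult_strict_left_mono add_less_le_mono) auto
    also have "\<dots> < r"
      using q r by (simp add: field_simps)
    finally show "norm (integral {0..1} (\<lambda>x. \<bar>kant_warp (c n) n g x - g x\<bar> powr p) - 0) < r"
      using dev_nonneg by simp
  qed
qed

section \<open>The weighted operator\<close>

lemma in_Lp_muD:
  assumes p: "p \<ge> 1" and f: "in_Lp_mu \<mu> p f"
  shows "f_mu \<mu> f \<in> borel_measurable (lebesgue_on {0..1})"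
    and "(\<lambda>x. \<bar>f_mu \<mu> f x\<bar> powr p) integrable_on {0..1}"
    and "f_mu \<mu> f absolutely_integrable_on {0..1}"
    and "wnorm_pow \<mu> p f = integral {0..1} (\<lambda>x. \<bar>f_mu \<mu> f x\<bar> powr p)"
proof -
  have id_meas: "(\<lambda>x::real. x) \<in> borel_measurable (lebesgue_on {0..1})"
    by (intro continuous_imp_measurable_on_sets_lebesgue continuous_on_id) auto
  have f_meas: "f \<in> borel_measurable (lebesgue_on {0..1})"
    using f by (simp add: in_Lp_mu_def)
  show meas: "f_mu \<mu> f \<in> borel_measurable (lebesgue_on {0..1})"
    unfolding f_mu_def[abs_def] ln_mu_def using f_meas id_meas by measurable
  have set_int: "set_integrable lebesgue {0..1} (\<lambda>x. \<bar>f_mu \<mu> f x\<bar> powr p)"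
    using f by (simp add: in_Lp_mu_def)
  show int: "(\<lambda>x. \<bar>f_mu \<mu> f x\<bar> powr p) integrable_on {0..1}"
    and "wnorm_pow \<mu> p f = integral {0..1} (\<lambda>x. \<bar>f_mu \<mu> f x\<bar> powr p)"
    using set_lebesgue_integral_eq_integral[OF set_int] by (auto simp: wnorm_pow_def)
  show "f_mu \<mu> f absolutely_integrable_on {0..1}"
    using abs_le_one_plus_abs_powr[OF p]
    by (intro measurable_bounded_by_integrable_imp_absolutely_integrable[OF meas _
        integrable_add[OF integrable_const_ivl int]]) auto
qed

lemma wnorm_pow_eq_integral:
  assumes eq: "\<And>x. x \<in> {0..1} \<Longrightarrow> f_mu \<mu> F x = G x"
    and int: "(\<lambda>x. \<bar>G x\<bar> powr p) integrable_on {0..1}"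
  shows "wnorm_pow \<mu> p F = integral {0..1} (\<lambda>x. \<bar>G x\<bar> powr p)"
proof -
  have "(\<lambda>x. \<bar>G x\<bar> powr p) absolutely_integrable_on {0..1}"
    using int by (simp add: absolutely_integrable_on_iff_nonneg)
  then have "(LINT x:{0..1}|lebesgue. \<bar>G x\<bar> powr p) = integral {0..1} (\<lambda>x. \<bar>G x\<bar> powr p)"
    by (rule set_lebesgue_integral_eq_integral(2))
  moreover have "wnorm_pow \<mu> p F = (LINT x:{0..1}|lebesgue. \<bar>G x\<bar> powr p)"
    unfolding wnorm_pow_def by (rule set_lebesgue_integral_cong) (auto simp: eq)
  ultimately show ?thesis by simp
qed

lemma f_mu_kant_op:
  assumes \<mu>: "\<mu> > 0" and f: "f_mu \<mu> f absolutely_integrable_on {0..1}" and x: "x \<in> {0..1}"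
  shows "f_mu \<mu> (kant_op \<mu> n f) x = kant_warp (1 / (real (n + 1) * (1 + \<mu>))) n (f_mu \<mu> f) x"
proof -
  have "(LINT t:cell n k|lebesgue. f_mu \<mu> f t) = integral (cell n k) (f_mu \<mu> f)" if "k \<le> n" for k
    using set_integrable_subset[OF f _ cell_subset[OF that]]
    by (intro set_lebesgue_integral_eq_integral(2)) (auto simp: cell_def)
  moreover have "a_seq \<mu> (n + 1) x = log_warp (1 / (real (n + 1) * (1 + \<mu>))) x"
    by (simp add: a_seq_def log_warp_def)
  ultimately have "kant_op \<mu> n f x = ln_mu \<mu> x * kant_warp (1 / (real (n + 1) * (1 + \<mu>))) n (f_mu \<mu> f) x"
    unfolding kant_op_def kant_warp_def bern_basis_eq_Bernstein atLeast0AtMost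
    by (intro arg_cong2[where f = "(*)"] refl sum.cong) (auto simp: cell_def)
  moreover have "ln_mu \<mu> x > 0"
    using \<mu> x by (simp add: ln_mu_def)
  ultimately show ?thesis
    by (simp add: f_mu_def)
qed

lemma warp_scale_bounds:
  fixes \<mu> :: real
  assumes "\<mu> > 0"
  shows "0 < 1 / (real (n + 1) * (1 + \<mu>))" "1 / (real (n + 1) * (1 + \<mu>)) \<le> 1 / real (n + 1)"
    "1 / (real (n + 1) * (1 + \<mu>)) \<le> 1 / (1 + \<mu>)"
proof -
  have "real (n + 1) \<le> real (n + 1) * (1 + \<mu>)" "1 + \<mu> \<le> real (n + 1) * (1 + \<mu>)"
    using assms by simp_all
  with assms show "0 < 1 / (real (n + 1) * (1 + \<mu>))" "1 / (real (n + 1) * (1 + \<mu>)) \<le> 1 / real (n + 1)"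
    "1 / (real (n + 1) * (1 + \<mu>)) \<le> 1 / (1 + \<mu>)"
    by (auto intro!: frac_le)
qed

lemma wnorm_pow_kant_op_le:
  assumes \<mu>: "\<mu> > 0" and p: "p \<ge> 1" and f: "in_Lp_mu \<mu> p f"
  shows "wnorm_pow \<mu> p (kant_op \<mu> n f) \<le> (1 + 1 / (real (n + 1) * (1 + \<mu>))) * wnorm_pow \<mu> p f"
proof -
  note g = in_Lp_muD[OF p f] and c = warp_scale_bounds(1)[OF \<mu>, of n]
  have "wnorm_pow \<mu> p (kant_op \<mu> n f)
      = integral {0..1} (\<lambda>x. \<bar>kant_warp (1 / (real (n + 1) * (1 + \<mu>))) n (f_mu \<mu> f) x\<bar> powr p)"
    by (rule wnorm_pow_eq_integral[OF f_mu_kant_op[OF \<mu> g(3)] integrable_kant_warp_abs_powr[OF c p]])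
  also have "\<dots> \<le> (1 + 1 / (real (n + 1) * (1 + \<mu>))) * wnorm_pow \<mu> p f"
    unfolding g(4)
    by (rule integral_kant_warp_abs_powr_le[OF c p abs_powr_integrable_imp_integrable_on[OF p g(1,2)] g(2)])
  finally show ?thesis .
qed

lemma wnorm_kant_op_dev:
  assumes \<mu>: "\<mu> > 0" and p: "p \<ge> 1" and f: "in_Lp_mu \<mu> p f"
  shows "wnorm \<mu> p (\<lambda>x. kant_op \<mu> n f x - f x) = integral {0..1} (\<lambda>x.
    \<bar>kant_warp (1 / (real (n + 1) * (1 + \<mu>))) n (f_mu \<mu> f) x - f_mu \<mu> f x\<bar> powr p) powr (1 / p)"
proof -
  note g = in_Lp_muD[OF p f] and c = warp_scale_bounds(1)[OF \<mu>, of n]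
  have "f_mu \<mu> (\<lambda>x. kant_op \<mu> n f x - f x) x
      = kant_warp (1 / (real (n + 1) * (1 + \<mu>))) n (f_mu \<mu> f) x - f_mu \<mu> f x" if "x \<in> {0..1}" for x
    using f_mu_kant_op[OF \<mu> g(3) that] by (simp add: f_mu_def diff_divide_distrib)
  from wnorm_pow_eq_integral[OF this kant_warp_dev_abs_powr_integrable[OF c p g(1,2)]]
  show ?thesis
    by (simp add: wnorm_def)
qed

theorem theorem3p2:
  fixes \<mu> p :: real and f :: "real \<Rightarrow> real"
  assumes "\<mu> > 0" and "1 \<le> p" and "in_Lp_mu \<mu> p f"
  shows "(\<forall>n::nat. n \<ge> 1 \<longrightarrow>
            wnorm_pow \<mu> p (kant_op \<mu> n f) \<le> (1 + 1 / (1 + \<mu>)) * wnorm_pow \<mu> p f)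
       \<and> ((\<lambda>n. wnorm \<mu> p (\<lambda>x. kant_op \<mu> n f x - f x)) \<longlonglongrightarrow> 0)"
proof -
  note \<mu> = \<open>\<mu> > 0\<close> and p = \<open>1 \<le> p\<close> and f = \<open>in_Lp_mu \<mu> p f\<close>
  note g = in_Lp_muD[OF p f] and c = warp_scale_bounds[OF \<mu>]
  have "wnorm_pow \<mu> p (kant_op \<mu> n f) \<le> (1 + 1 / (1 + \<mu>)) * wnorm_pow \<mu> p f" for n
  proof -
    have "0 \<le> wnorm_pow \<mu> p f"
      unfolding g(4) using g(2) by (rule integral_nonneg) simp
    with c(3)[of n] have "(1 + 1 / (real (n + 1) * (1 + \<mu>))) * wnorm_pow \<mu> p f
        \<le> (1 + 1 / (1 + \<mu>)) * wnorm_pow \<mu> p f"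
      by (intro mult_right_mono) simp_all
    with wnorm_pow_kant_op_le[OF \<mu> p f, of n] show ?thesis
      by (rule order_trans)
  qed
  moreover have "(\<lambda>n. wnorm \<mu> p (\<lambda>x. kant_op \<mu> n f x - f x)) \<longlonglongrightarrow> 0"
    unfolding wnorm_kant_op_dev[OF \<mu> p f]
  proof (rule tendsto_zero_powrI[OF kant_warp_Lp_tendsto[OF p g(1,2) c(1,2)]])
    show "\<forall>\<^sub>F n in sequentially. 0 \<le> integral {0..1}
        (\<lambda>x. \<bar>kant_warp (1 / (real (n + 1) * (1 + \<mu>))) n (f_mu \<mu> f) x - f_mu \<mu> f x\<bar> powr p)"
      using kant_warp_dev_abs_powr_integrable[OF c(1) p g(1,2)] by (simp add: integral_nonneg)
  qed (use p in auto)
  ultimately show ?thesis by simp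
qed

end
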